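(* Let $\mathcal{G}=(G,\odot,\leq)$ be a real continuous Alo-group with $G$ an open interval of $\mathbb{R}$ and identity $e$, and let $\tilde A$ be an $n\times n$ $[\mathcal{G}]$-reciprocal IPCM with $n\geq 3$. Then $I_{[\mathcal{G}]}(\tilde A)\geq e$, and $I_{[\mathcal{G}]}(\tilde A)=e$ if and only if $\tilde A$ is $[\mathcal{G}]$-consistent.
   Context: An Alo-group $(G,\odot,\leq)$ is an Abelian group with a weak order $\leq$ such that $a\leq b\Rightarrow a\odot c\leq b\odot c$; real means $G\subseteq\mathbb{R}$ with usual order, continuous means $\odot$ is continuous. $a\div b=a\odot b^{(-1)}$, $\|a\|_{\mathcal{G}}=\max\{a,a^{(-1)}\}$, $d_{\mathcal{G}}(a,b)=\|a\div b\|_{\mathcal{G}}$. For $m\in\mathbb{N}$, $a^{(m)}$ is the $m$-fold $\odot$-product of $a$, and $a^{(1/m)}$ is the unique $x\in G$ with $x^{(m)}=a$. $[G]=\{[a^-,a^+]: a^-,a^+\in G,\ a^-\leq a^+\}$; $\tilde a^{(-1)}=[(a^+)^{(-1)},(a^-)^{(-1)}]$; $\tilde a\odot_{[G]}\tilde b=\{a\odot b: a\in\tilde a,b\in\tilde b\}$; $d_{[\mathcal{G}]}(\tilde a,\tilde b)=\max\{d_{\mathcal{G}}(a^-,b^-),d_{\mathcal{G}}(a^+,b^+)\}$. An IPCM $\tilde A=([a^-_{ij},a^+_{ij}])$ is an $n\times n$ matrix with entries in $[G]$; $[\mathcal{G}]$-reciprocal means $\tilde a_{ji}=\tilde a_{ij}^{(-1)}$;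 $[\mathcal{G}]$-consistent means $\tilde a_{ij}\odot_{[G]}\tilde a_{jk}\odot_{[G]}\tilde a_{ki}=\tilde a_{ik}\odot_{[G]}\tilde a_{kj}\odot_{[G]}\tilde a_{ji}$ for all $i,j,k$. Let $\tilde a_{ijk}=[a^-_{ij}\odot a^-_{jk}\odot a^-_{ki},\ a^+_{ij}\odot a^+_{jk}\odot a^+_{ki}]$ and $\tilde a_{ikj}=[a^-_{ik}\odot a^-_{kj}\odot a^-_{ji},\ a^+_{ik}\odot a^+_{kj}\odot a^+_{ji}]$. The $[\mathcal{G}]$-consistency index is $I_{[\mathcal{G}]}(\tilde A)=\Big(\bigodot_{i<j<k}d_{[\mathcal{G}]}(\tilde a_{ijk},\tilde a_{ikj})\Big)^{(1/|T|)}$, where $T=\{(i,j,k):i<j<k\}$, $|T|=n(n-1)(n-2)/6$. *)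

theory Defs
  imports "HOL-Analysis.Analysis"
begin

definition alo_group :: "real set \<Rightarrow> (real \<Rightarrow> real \<Rightarrow> real) \<Rightarrow> bool" where
  "alo_group G f \<longleftrightarrow>
     (\<forall>a\<in>G. \<forall>b\<in>G. f a b \<in> G) \<and>
     (\<forall>a\<in>G. \<forall>b\<in>G. \<forall>c\<in>G. f (f a b) c = f a (f b c)) \<and>
     (\<forall>a\<in>G. \<forall>b\<in>G. f a b = f b a) \<and>
     (\<exists>e\<in>G. (\<forall>a\<in>G. f a e = a) \<and> (\<forall>a\<in>G. \<exists>x\<in>G. f a x = e)) \<and>
     (\<forall>a\<in>G. \<forall>b\<in>G. \<forall>c\<in>G. a \<le> b \<longrightarrow> f a c \<le> f b c)"

definition continuous_alo_group :: "real set \<Rightarrow> (real \<Rightarrow> real \<Rightarrow> real) \<Rightarrow> bool" where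
  "continuous_alo_group G f \<longleftrightarrow> alo_group G f \<and>
     continuous_on (G \<times> G) (\<lambda>p. f (fst p) (snd p))"

definition open_interval :: "real set \<Rightarrow> bool" where
  "open_interval G \<longleftrightarrow> G \<noteq> {} \<and> open G \<and> is_interval G"

definition alo_unit :: "real set \<Rightarrow> (real \<Rightarrow> real \<Rightarrow> real) \<Rightarrow> real" where
  "alo_unit G f = (THE e. e \<in> G \<and> (\<forall>a\<in>G. f a e = a))"

definition alo_inv :: "real set \<Rightarrow> (real \<Rightarrow> real \<Rightarrow> real) \<Rightarrow> real \<Rightarrow> real" where
  "alo_inv G f a = (THE x. x \<in> G \<and> f a x = alo_unit G f)"

definition alo_div :: "real set \<Rightarrow> (real \<Rightarrow> real \<Rightarrow> real) \<Rightarrow> real \<Rightarrow> real \<Rightarrow> real" where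
  "alo_div G f a b = f a (alo_inv G f b)"

definition alo_norm :: "real set \<Rightarrow> (real \<Rightarrow> real \<Rightarrow> real) \<Rightarrow> real \<Rightarrow> real" where
  "alo_norm G f a = max a (alo_inv G f a)"

definition alo_dist :: "real set \<Rightarrow> (real \<Rightarrow> real \<Rightarrow> real) \<Rightarrow> real \<Rightarrow> real \<Rightarrow> real" where
  "alo_dist G f a b = alo_norm G f (alo_div G f a b)"

fun alo_pow :: "real set \<Rightarrow> (real \<Rightarrow> real \<Rightarrow> real) \<Rightarrow> real \<Rightarrow> nat \<Rightarrow> real" where
  "alo_pow G f a 0 = alo_unit G f"
| "alo_pow G f a (Suc m) = f a (alo_pow G f a m)"

definition alo_root :: "real set \<Rightarrow> (real \<Rightarrow> real \<Rightarrow> real) \<Rightarrow> real \<Rightarrow> nat \<Rightarrow> real" where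
  "alo_root G f a m = (THE x. x \<in> G \<and> alo_pow G f x m = a)"

text \<open>Intervals of [G] are represented by pairs (a^-, a^+).\<close>
definition interval_set :: "real set \<Rightarrow> real \<times> real \<Rightarrow> real set" where
  "interval_set G a = {x \<in> G. fst a \<le> x \<and> x \<le> snd a}"

definition ival_inv :: "real set \<Rightarrow> (real \<Rightarrow> real \<Rightarrow> real) \<Rightarrow> real \<times> real \<Rightarrow> real \<times> real" where
  "ival_inv G f a = (alo_inv G f (snd a), alo_inv G f (fst a))"

definition ival_mult_set :: "(real \<Rightarrow> real \<Rightarrow> real) \<Rightarrow> real set \<Rightarrow> real set \<Rightarrow> real set" where
  "ival_mult_set f A B = {f a b | a b. a \<in> A \<and> b \<in> B}"

definition ival_dist :: "real set \<Rightarrow> (real \<Rightarrow> real \<Rightarrow> real) \<Rightarrow> real \<times> real \<Rightarrow> real \<times> real \<Rightarrow> real" where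
  "ival_dist G f a b = max (alo_dist G f (fst a) (fst b)) (alo_dist G f (snd a) (snd b))"

definition is_IPCM :: "real set \<Rightarrow> nat \<Rightarrow> (nat \<Rightarrow> nat \<Rightarrow> real \<times> real) \<Rightarrow> bool" where
  "is_IPCM G n A \<longleftrightarrow> (\<forall>i<n. \<forall>j<n. fst (A i j) \<in> G \<and> snd (A i j) \<in> G \<and> fst (A i j) \<le> snd (A i j))"

definition ipcm_reciprocal :: "real set \<Rightarrow> (real \<Rightarrow> real \<Rightarrow> real) \<Rightarrow> nat \<Rightarrow> (nat \<Rightarrow> nat \<Rightarrow> real \<times> real) \<Rightarrow> bool" where
  "ipcm_reciprocal G f n A \<longleftrightarrow> (\<forall>i<n. \<forall>j<n. A j i = ival_inv G f (A i j))"

definition ipcm_consistent :: "real set \<Rightarrow> (real \<Rightarrow> real \<Rightarrow> real) \<Rightarrow> nat \<Rightarrow> (nat \<Rightarrow> nat \<Rightarrow> real \<times> real) \<Rightarrow> bool" where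
  "ipcm_consistent G f n A \<longleftrightarrow> (\<forall>i<n. \<forall>j<n. \<forall>k<n.
     ival_mult_set f (ival_mult_set f (interval_set G (A i j)) (interval_set G (A j k))) (interval_set G (A k i))
   = ival_mult_set f (ival_mult_set f (interval_set G (A i k)) (interval_set G (A k j))) (interval_set G (A j i)))"

definition triple_ijk :: "(real \<Rightarrow> real \<Rightarrow> real) \<Rightarrow> (nat \<Rightarrow> nat \<Rightarrow> real \<times> real) \<Rightarrow> nat \<Rightarrow> nat \<Rightarrow> nat \<Rightarrow> real \<times> real" where
  "triple_ijk f A i j k =
     (f (f (fst (A i j)) (fst (A j k))) (fst (A k i)), f (f (snd (A i j)) (snd (A j k))) (snd (A k i)))"

definition triples :: "nat \<Rightarrow> (nat \<times> nat \<times> nat) list" where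
  "triples n = [(i, j, k). i \<leftarrow> [0..<n], j \<leftarrow> [Suc i..<n], k \<leftarrow> [Suc j..<n]]"

definition consistency_index :: "real set \<Rightarrow> (real \<Rightarrow> real \<Rightarrow> real) \<Rightarrow> nat \<Rightarrow> (nat \<Rightarrow> nat \<Rightarrow> real \<times> real) \<Rightarrow> real" where
  "consistency_index G f n A =
     alo_root G f
       (foldr (\<lambda>(i, j, k) acc. f (ival_dist G f (triple_ijk f A i j k) (triple_ijk f A i k j)) acc)
          (triples n) (alo_unit G f))
       (card {(i, j, k). i < j \<and> j < k \<and> k < n})"

end

theory Submission
  imports Defs
begin

text \<open>Each factor d(a_ijk, a_ikj) of the index lies above e, with equality iff the endpoint
pairs a_ijk and a_ikj coincide; hence so does their product, with equality iff every factor is e.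
On the interval G the map x \<mapsto> x^(m) is continuous and strictly increasing, so the m-th root
exists, is unique and preserves both properties. Monotonicity and continuity of \<odot> give
[a,b] \<odot> [c,d] = [a \<odot> c, b \<odot> d], so consistency at (i,j,k) means exactly a_ijk = a_ikj;
by commutativity this is invariant under permuting i, j, k, so the triples i < j < k decide it.\<close>

definition triple_discrepancy ::
  "real set \<Rightarrow> (real \<Rightarrow> real \<Rightarrow> real) \<Rightarrow> (nat \<Rightarrow> nat \<Rightarrow> real \<times> real) \<Rightarrow> nat \<times> nat \<times> nat \<Rightarrow> real"
  where "triple_discrepancy G f A = (\<lambda>(i, j, k). ival_dist G f (triple_ijk f A i j k) (triple_ijk f A i k j))"

lemma consistency_index_eq:
  "consistency_index G f n A =
    alo_root G f (foldr (\<lambda>t. f (triple_discrepancy G f A t)) (triples n) (alo_unit G f))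
      (card {(i, j, k). i < j \<and> j < k \<and> k < n})"
  unfolding consistency_index_def triple_discrepancy_def by (simp add: split_def)

lemma set_triples: "set (triples n) = {(i, j, k). i < j \<and> j < k \<and> k < n}"
proof -
  have "(i, j, k) \<in> set (triples n)" if "i < j" "j < k" "k < n" for i j k
  proof -
    have "(i, j, k) \<in> (\<lambda>c. (i, j, c)) ` {Suc j..<n}" using that by auto
    then have "\<exists>a\<in>{0..<n}. \<exists>b\<in>{Suc a..<n}. (i, j, k) \<in> (\<lambda>c. (a, b, c)) ` {Suc b..<n}"
      using that by (intro bexI[of _ i] bexI[of _ j]) auto
    then show ?thesis unfolding triples_def by simp
  qed
  then show ?thesis unfolding triples_def by auto
qed

lemma card_sorted_triples_pos:
  assumes "n \<ge> 3"
  shows "card {(i, j, k). i < j \<and> j < k \<and> (k::nat) < n} > 0"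
proof -
  have "(0, 1, 2) \<in> set (triples n)"
    using assms by (simp add: set_triples)
  then show ?thesis
    unfolding set_triples[symmetric] by (metis card_gt_0_iff empty_iff finite_set)
qed

lemma sorted_triples_suffice:
  fixes P :: "nat \<Rightarrow> nat \<Rightarrow> nat \<Rightarrow> bool"
  assumes rotate: "\<And>i j k. P i j k \<Longrightarrow> P j k i"
    and swap: "\<And>i j k. P i j k \<Longrightarrow> P i k j"
    and diagonal: "\<And>i j. P i j j"
    and sorted: "\<And>i j k. i < j \<Longrightarrow> j < k \<Longrightarrow> P i j k"
  shows "P i j k"
proof -
  have swap_first: "P j i k" if "P i j k" for i j k
    using rotate swap that by blast
  show ?thesis
    by (cases i j rule: linorder_cases; cases j k rule: linorder_cases; cases i k rule: linorder_cases)
      (use rotate swap swap_first diagonal sorted in blast)+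
qed

lemma is_IPCM_entry:
  assumes "is_IPCM G n A" "i < n" "j < n"
  shows "fst (A i j) \<in> G" "snd (A i j) \<in> G" "fst (A i j) \<le> snd (A i j)"
  using assms unfolding is_IPCM_def by blast+

locale real_alo_group =
  fixes G :: "real set" and f :: "real \<Rightarrow> real \<Rightarrow> real"
  assumes alo_group: "alo_group G f"
begin

abbreviation e :: real where "e \<equiv> alo_unit G f"

lemma closed: "a \<in> G \<Longrightarrow> b \<in> G \<Longrightarrow> f a b \<in> G"
  using alo_group unfolding alo_group_def by blast

lemma assoc: "a \<in> G \<Longrightarrow> b \<in> G \<Longrightarrow> c \<in> G \<Longrightarrow> f (f a b) c = f a (f b c)"
  using alo_group unfolding alo_group_def by blast

lemma commute: "a \<in> G \<Longrightarrow> b \<in> G \<Longrightarrow> f a b = f b a"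
  using alo_group unfolding alo_group_def by blast

lemma mono_left: "a \<in> G \<Longrightarrow> b \<in> G \<Longrightarrow> c \<in> G \<Longrightarrow> a \<le> b \<Longrightarrow> f a c \<le> f b c"
  using alo_group unfolding alo_group_def by blast

lemma unit_props: "e \<in> G \<and> (\<forall>a\<in>G. f a e = a) \<and> (\<forall>a\<in>G. \<exists>x\<in>G. f a x = e)"
proof -
  obtain u where u: "u \<in> G" "\<forall>a\<in>G. f a u = a" "\<forall>a\<in>G. \<exists>x\<in>G. f a x = u"
    using alo_group unfolding alo_group_def by blast
  have "e = u"
    unfolding alo_unit_def
  proof (rule the_equality)
    fix u' assume "u' \<in> G \<and> (\<forall>a\<in>G. f a u' = a)"
    then show "u' = u" using u commute by metis
  qed (use u in blast)
  then show ?thesis using u by simp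
qed

lemma unit_in: "e \<in> G" and unit_right: "a \<in> G \<Longrightarrow> f a e = a"
  using unit_props by blast+

lemma unit_left: "a \<in> G \<Longrightarrow> f e a = a"
  using unit_right commute unit_in by metis

lemma inv_in: "a \<in> G \<Longrightarrow> alo_inv G f a \<in> G"
  and mult_inv: "a \<in> G \<Longrightarrow> f a (alo_inv G f a) = e"
proof -
  assume a: "a \<in> G"
  obtain x where x: "x \<in> G" "f a x = e" using unit_props a by blast
  have "alo_inv G f a = x"
    unfolding alo_inv_def
  proof (rule the_equality)
    fix y assume y: "y \<in> G \<and> f a y = e"
    have "y = f y (f a x)" using x y unit_right by simp
    also have "\<dots> = f (f a y) x" using assoc commute x y a by metis
    finally show "y = x" using y unit_left x by simp
  qed (use x in blast)
  then show "alo_inv G f a \<in> G" "f a (alo_inv G f a) = e" using x by simp_all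
qed

lemma mult_rotate: "x \<in> G \<Longrightarrow> y \<in> G \<Longrightarrow> z \<in> G \<Longrightarrow> f (f y z) x = f (f x y) z"
  by (metis assoc closed commute)

lemma cancel_right: "a \<in> G \<Longrightarrow> b \<in> G \<Longrightarrow> c \<in> G \<Longrightarrow> f a c = f b c \<Longrightarrow> a = b"
  by (metis assoc inv_in mult_inv unit_right)

lemma strict_mono_left: "a \<in> G \<Longrightarrow> b \<in> G \<Longrightarrow> c \<in> G \<Longrightarrow> a < b \<Longrightarrow> f a c < f b c"
  by (metis cancel_right mono_left order_less_le)

lemma mono: "a \<in> G \<Longrightarrow> b \<in> G \<Longrightarrow> c \<in> G \<Longrightarrow> d \<in> G \<Longrightarrow> a \<le> b \<Longrightarrow> c \<le> d \<Longrightarrow> f a c \<le> f b d"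
  by (metis mono_left commute order_trans)

lemma strict_mono_right:
  "a \<in> G \<Longrightarrow> b \<in> G \<Longrightarrow> c \<in> G \<Longrightarrow> d \<in> G \<Longrightarrow> a \<le> b \<Longrightarrow> c < d \<Longrightarrow> f a c < f b d"
  by (metis mono_left strict_mono_left commute order_le_less_trans)

lemma unit_le_mult:
  assumes "a \<in> G" "b \<in> G" "e \<le> a" "e \<le> b"
  shows "e \<le> f a b" and "f a b = e \<longleftrightarrow> a = e \<and> b = e"
proof -
  have "f e e = e" using unit_in unit_right by simp
  moreover have "f e e \<le> f a b" using mono assms unit_in by blast
  moreover have "a \<noteq> e \<or> b \<noteq> e \<Longrightarrow> f e e < f a b"
    using assms unit_in strict_mono_right commute by (metis order_le_less)
  ultimately show "e \<le> f a b" "f a b = e \<longleftrightarrow> a = e \<and> b = e"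
    by (metis less_irrefl)+
qed

lemma inv_unit: "alo_inv G f e = e"
  by (metis cancel_right inv_in mult_inv unit_in unit_left)

lemma inv_gt_unit: "a \<in> G \<Longrightarrow> a < e \<Longrightarrow> e < alo_inv G f a"
  by (metis inv_in mult_inv strict_mono_left unit_in unit_left)

lemma inv_lt_unit: "a \<in> G \<Longrightarrow> e < a \<Longrightarrow> alo_inv G f a < e"
  by (metis inv_in mult_inv strict_mono_left unit_in unit_left)

lemma alo_norm_props:
  assumes "a \<in> G"
  shows "alo_norm G f a \<in> G" and "e \<le> alo_norm G f a" and "alo_norm G f a = e \<longleftrightarrow> a = e"
proof -
  have "alo_norm G f a \<in> G \<and> e \<le> alo_norm G f a \<and> (alo_norm G f a = e \<longleftrightarrow> a = e)"
    using assms inv_in[OF assms] inv_gt_unit[OF assms] inv_lt_unit[OF assms] inv_unit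
    unfolding alo_norm_def by (cases "a < e"; cases "a = e"; auto simp: max_def)
  then show "alo_norm G f a \<in> G" "e \<le> alo_norm G f a" "alo_norm G f a = e \<longleftrightarrow> a = e"
    by blast+
qed

lemma alo_dist_props:
  assumes "a \<in> G" "b \<in> G"
  shows "alo_dist G f a b \<in> G" and "e \<le> alo_dist G f a b" and "alo_dist G f a b = e \<longleftrightarrow> a = b"
proof -
  have div: "alo_div G f a b \<in> G" "alo_div G f a b = e \<longleftrightarrow> a = b"
    unfolding alo_div_def using assms closed inv_in mult_inv cancel_right by metis+
  then show "alo_dist G f a b \<in> G" "e \<le> alo_dist G f a b" "alo_dist G f a b = e \<longleftrightarrow> a = b"
    unfolding alo_dist_def using alo_norm_props by simp_all
qed

lemma ival_dist_props:
  assumes "fst a \<in> G" "snd a \<in> G" "fst b \<in> G" "snd b \<in> G"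
  shows "ival_dist G f a b \<in> G" and "e \<le> ival_dist G f a b" and "ival_dist G f a b = e \<longleftrightarrow> a = b"
  using alo_dist_props[of "fst a" "fst b"] alo_dist_props[of "snd a" "snd b"] assms
  unfolding ival_dist_def by (auto simp: max_def prod_eq_iff)

lemma foldr_mult_props:
  assumes "\<forall>x\<in>set xs. g x \<in> G \<and> e \<le> g x"
  shows "foldr (\<lambda>x. f (g x)) xs e \<in> G \<and> e \<le> foldr (\<lambda>x. f (g x)) xs e
    \<and> (foldr (\<lambda>x. f (g x)) xs e = e \<longleftrightarrow> (\<forall>x\<in>set xs. g x = e))"
  using assms by (induction xs) (auto simp: unit_in closed unit_le_mult)

lemma triple_ijk_bounds:
  assumes "is_IPCM G n A" "i < n" "j < n" "k < n"
  shows "fst (triple_ijk f A i j k) \<in> G" "snd (triple_ijk f A i j k) \<in> G"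
    "fst (triple_ijk f A i j k) \<le> snd (triple_ijk f A i j k)"
  using is_IPCM_entry[OF assms(1)] assms(2-4)
  unfolding triple_ijk_def by (simp_all add: closed mono)

lemma triple_ijk_rotate:
  assumes "is_IPCM G n A" "i < n" "j < n" "k < n"
  shows "triple_ijk f A j k i = triple_ijk f A i j k"
  using is_IPCM_entry[OF assms(1)] assms(2-4)
    mult_rotate[of "fst (A i j)" "fst (A j k)" "fst (A k i)"]
    mult_rotate[of "snd (A i j)" "snd (A j k)" "snd (A k i)"]
  unfolding triple_ijk_def by simp

lemma triple_discrepancy_props:
  assumes "is_IPCM G n A" "i < n" "j < n" "k < n"
  shows "triple_discrepancy G f A (i, j, k) \<in> G" "e \<le> triple_discrepancy G f A (i, j, k)"
    "triple_discrepancy G f A (i, j, k) = e \<longleftrightarrow> triple_ijk f A i j k = triple_ijk f A i k j"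
  unfolding triple_discrepancy_def
  using ival_dist_props triple_ijk_bounds[OF assms] triple_ijk_bounds[OF assms(1,2,4,3)] by simp_all

lemma triples_eq_iff_sorted_triples_eq:
  assumes "is_IPCM G n A"
  shows "(\<forall>i<n. \<forall>j<n. \<forall>k<n. triple_ijk f A i j k = triple_ijk f A i k j) \<longleftrightarrow>
    (\<forall>i j k. i < j \<longrightarrow> j < k \<longrightarrow> k < n \<longrightarrow> triple_ijk f A i j k = triple_ijk f A i k j)"
proof (intro iffI allI impI)
  fix i j k :: nat
  assume sorted: "\<forall>i j k. i < j \<longrightarrow> j < k \<longrightarrow> k < n \<longrightarrow> triple_ijk f A i j k = triple_ijk f A i k j"
  define C where "C i j k \<longleftrightarrow>
    (i < n \<longrightarrow> j < n \<longrightarrow> k < n \<longrightarrow> triple_ijk f A i j k = triple_ijk f A i k j)" for i j k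
  have "C i j k"
  proof (rule sorted_triples_suffice)
    fix i j k assume "C i j k"
    then show "C j k i"
      unfolding C_def using triple_ijk_rotate[OF assms, of i j k]
        triple_ijk_rotate[OF assms, of i k j] triple_ijk_rotate[OF assms, of k j i] by auto
  qed (use sorted in \<open>auto simp: C_def\<close>)
  then show "i < n \<Longrightarrow> j < n \<Longrightarrow> k < n \<Longrightarrow> triple_ijk f A i j k = triple_ijk f A i k j"
    unfolding C_def by blast
qed auto

end

locale continuous_alo_interval = real_alo_group +
  assumes continuous: "continuous_on (G \<times> G) (\<lambda>p. f (fst p) (snd p))"
    and interval: "is_interval G"
begin

lemma mem_between: "a \<in> G \<Longrightarrow> b \<in> G \<Longrightarrow> a \<le> x \<Longrightarrow> x \<le> b \<Longrightarrow> x \<in> G"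
  using interval unfolding is_interval_1 by blast

lemma alo_pow_in: "x \<in> G \<Longrightarrow> alo_pow G f x m \<in> G"
  by (induction m) (auto simp: unit_in closed)

lemma alo_pow_unit: "alo_pow G f e m = e"
  by (induction m) (auto simp: unit_in unit_right)

lemma alo_pow_mono: "x \<in> G \<Longrightarrow> y \<in> G \<Longrightarrow> x \<le> y \<Longrightarrow> alo_pow G f x m \<le> alo_pow G f y m"
  by (induction m) (auto simp: alo_pow_in mono)

lemma alo_pow_strict_mono:
  assumes "x \<in> G" "y \<in> G" "x < y" "m \<ge> 1"
  shows "alo_pow G f x m < alo_pow G f y m"
proof -
  obtain k where m: "m = Suc k" using assms(4) by (cases m) auto
  have "f x (alo_pow G f x k) < f y (alo_pow G f y k)"
    using strict_mono_right[of "alo_pow G f x k" "alo_pow G f y k" x y]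
      alo_pow_mono[of x y k] alo_pow_in assms commute by (simp add: less_imp_le)
  then show ?thesis using m by simp
qed

lemma le_alo_pow: "x \<in> G \<Longrightarrow> e \<le> x \<Longrightarrow> m \<ge> 1 \<Longrightarrow> x \<le> alo_pow G f x m"
proof (induction m)
  case (Suc k)
  then show ?case
    using alo_pow_mono[of e x k] mono[of x x e "alo_pow G f x k"]
    by (simp add: alo_pow_unit alo_pow_in unit_in unit_right)
qed simp

lemma continuous_on_alo_pow: "continuous_on G (\<lambda>x. alo_pow G f x m)"
proof (induction m)
  case (Suc k)
  have "continuous_on G ((\<lambda>p. f (fst p) (snd p)) \<circ> (\<lambda>x. (x, alo_pow G f x k)))"
    using Suc alo_pow_in
    by (intro continuous_on_compose continuous_on_Pair continuous_on_id
        continuous_on_subset[OF continuous]) auto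
  then show ?case by (simp add: o_def)
qed simp

lemma alo_root_eqI:
  assumes "x \<in> G" "alo_pow G f x m = P" "m \<ge> 1"
  shows "alo_root G f P m = x"
  unfolding alo_root_def
proof (rule the_equality)
  fix y assume y: "y \<in> G \<and> alo_pow G f y m = P"
  show "y = x"
  proof (rule linorder_cases[of y x])
    assume "y < x"
    then show ?thesis using alo_pow_strict_mono[of y x m] assms y by simp
  next
    assume "x < y"
    then show ?thesis using alo_pow_strict_mono[of x y m] assms y by simp
  qed
qed (use assms in blast)

lemma alo_root_props:
  assumes "P \<in> G" "e \<le> P" "m \<ge> 1"
  shows "alo_root G f P m \<in> G" and "e \<le> alo_root G f P m"
    and "alo_root G f P m = e \<longleftrightarrow> P = e"
proof -
  have sub: "{e..P} \<subseteq> G" using mem_between[OF unit_in assms(1)] by auto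
  obtain x where x: "e \<le> x" "x \<le> P" "alo_pow G f x m = P"
    using IVT'[of "\<lambda>x. alo_pow G f x m" e P P] continuous_on_subset[OF continuous_on_alo_pow sub]
      alo_pow_unit le_alo_pow assms by auto
  have "x \<in> G" using sub x by auto
  then have "alo_root G f P m = x" using alo_root_eqI x assms by blast
  then show "alo_root G f P m \<in> G" "e \<le> alo_root G f P m" "alo_root G f P m = e \<longleftrightarrow> P = e"
    using \<open>x \<in> G\<close> x alo_pow_unit by auto
qed

lemma ival_mult_set_Icc:
  assumes "a \<in> G" "b \<in> G" "c \<in> G" "d \<in> G" "a \<le> b" "c \<le> d"
  shows "ival_mult_set f {a..b} {c..d} = {f a c..f b d}"
proof
  have sub: "{a..b} \<subseteq> G" "{c..d} \<subseteq> G"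
    using mem_between[OF assms(1,2)] mem_between[OF assms(3,4)] by auto
  show "ival_mult_set f {a..b} {c..d} \<subseteq> {f a c..f b d}"
  proof
    fix z assume "z \<in> ival_mult_set f {a..b} {c..d}"
    then obtain x y where xy: "z = f x y" "x \<in> {a..b}" "y \<in> {c..d}"
      unfolding ival_mult_set_def by blast
    with sub have "x \<in> G" "y \<in> G" by auto
    with xy show "z \<in> {f a c..f b d}" using assms mono[of a x c y] mono[of x b y d] by auto
  qed
  let ?S = "(\<lambda>p. f (fst p) (snd p)) ` ({a..b} \<times> {c..d})"
  have "connected ?S"
  proof (rule connected_continuous_image)
    show "continuous_on ({a..b} \<times> {c..d}) (\<lambda>p. f (fst p) (snd p))"
      using continuous_on_subset[OF continuous Sigma_mono[OF sub]] by blast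
  qed (intro connected_Times connected_Icc)
  moreover have "f a c \<in> ?S" by (rule image_eqI[where x="(a, c)"]) (use assms in auto)
  moreover have "f b d \<in> ?S" by (rule image_eqI[where x="(b, d)"]) (use assms in auto)
  ultimately have S: "{f a c..f b d} \<subseteq> ?S"
    by (rule connected_contains_Icc)
  show "{f a c..f b d} \<subseteq> ival_mult_set f {a..b} {c..d}"
  proof
    fix z assume "z \<in> {f a c..f b d}"
    with S obtain p where "p \<in> {a..b} \<times> {c..d}" "z = f (fst p) (snd p)" by blast
    then show "z \<in> ival_mult_set f {a..b} {c..d}" unfolding ival_mult_set_def by force
  qed
qed

lemma interval_set_eq: "fst p \<in> G \<Longrightarrow> snd p \<in> G \<Longrightarrow> interval_set G p = {fst p..snd p}"
  unfolding interval_set_def using mem_between[of "fst p" "snd p"] by auto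

lemma ival_mult_set_triple:
  assumes "is_IPCM G n A" "i < n" "j < n" "k < n"
  shows "ival_mult_set f (ival_mult_set f (interval_set G (A i j)) (interval_set G (A j k)))
      (interval_set G (A k i)) = {fst (triple_ijk f A i j k)..snd (triple_ijk f A i j k)}"
  using is_IPCM_entry[OF assms(1)] assms(2-4)
  unfolding triple_ijk_def by (simp add: interval_set_eq ival_mult_set_Icc closed mono)

lemma ipcm_consistent_iff_triples_eq:
  assumes "is_IPCM G n A"
  shows "ipcm_consistent G f n A \<longleftrightarrow>
    (\<forall>i<n. \<forall>j<n. \<forall>k<n. triple_ijk f A i j k = triple_ijk f A i k j)"
  unfolding ipcm_consistent_def
  using ival_mult_set_triple[OF assms] triple_ijk_bounds[OF assms]
  by (auto simp: prod_eq_iff)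

lemma discrepancy_product_props:
  assumes "is_IPCM G n A"
  defines "P \<equiv> foldr (\<lambda>t. f (triple_discrepancy G f A t)) (triples n) e"
  shows "P \<in> G" and "e \<le> P" and "P = e \<longleftrightarrow> ipcm_consistent G f n A"
proof -
  let ?d = "triple_discrepancy G f A"
  have "?d t \<in> G \<and> e \<le> ?d t" if "t \<in> set (triples n)" for t
    using that triple_discrepancy_props[OF assms(1)] by (auto simp: set_triples)
  then have P: "P \<in> G" "e \<le> P" "P = e \<longleftrightarrow> (\<forall>t\<in>set (triples n). ?d t = e)"
    unfolding P_def using foldr_mult_props[of "triples n" ?d] by blast+
  have "(\<forall>t\<in>set (triples n). ?d t = e) \<longleftrightarrow>
      (\<forall>i j k. i < j \<longrightarrow> j < k \<longrightarrow> k < n \<longrightarrow> ?d (i, j, k) = e)"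
    by (auto simp: set_triples)
  also have "\<dots> \<longleftrightarrow>
      (\<forall>i j k. i < j \<longrightarrow> j < k \<longrightarrow> k < n \<longrightarrow> triple_ijk f A i j k = triple_ijk f A i k j)"
    using triple_discrepancy_props(3)[OF assms(1)] by (meson order.strict_trans)
  also have "\<dots> \<longleftrightarrow> ipcm_consistent G f n A"
    using ipcm_consistent_iff_triples_eq triples_eq_iff_sorted_triples_eq assms(1) by simp
  finally show "P \<in> G" "e \<le> P" "P = e \<longleftrightarrow> ipcm_consistent G f n A" using P by simp_all
qed

lemma consistency_index_props:
  assumes "is_IPCM G n A" "n \<ge> 3"
  shows "e \<le> consistency_index G f n A"
    and "consistency_index G f n A = e \<longleftrightarrow> ipcm_consistent G f n A"
  using alo_root_props[OF discrepancy_product_props(1,2)[OF assms(1)]]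
    discrepancy_product_props(3)[OF assms(1)] card_sorted_triples_pos[OF assms(2)]
  unfolding consistency_index_eq by (simp_all add: Suc_le_eq)

end

theorem proposition14:
  fixes G :: "real set" and f :: "real \<Rightarrow> real \<Rightarrow> real" and e :: real
    and n :: nat and A :: "nat \<Rightarrow> nat \<Rightarrow> real \<times> real"
  assumes "continuous_alo_group G f"
    and "open_interval G"
    and "e = alo_unit G f"
    and "is_IPCM G n A"
    and "ipcm_reciprocal G f n A"
    and "n \<ge> 3"
  shows "consistency_index G f n A \<ge> e
    \<and> (consistency_index G f n A = e \<longleftrightarrow> ipcm_consistent G f n A)"
proof -
  interpret continuous_alo_interval G f
    using assms(1,2) unfolding continuous_alo_group_def open_interval_def
    by unfold_locales auto
  show ?thesis
    using consistency_index_props[OF assms(4,6)] assms(3) by simp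
qed

end
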